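(* A Möbius transformation of $\mathcal A_2^{(0,1)}\cup\{\infty\}$ fixes both $-1$ and $1$ if and only if its Vahlen matrices $\pm A$ are of the form $$A=\begin{pmatrix}\cosh x&\sinh x\\ \sinh x&\cosh x\end{pmatrix}\quad\text{for some }x\in\mathcal A_2.$$
   Context: $\mathcal A_2$ is the real associative algebra generated by $e_1,e_2$ with $e_1^2=e_2^2=-1$, $e_1e_2=-e_2e_1$ (basis $1,e_1,e_2,e_1e_2$). For $a=a_0+a_1e_1+a_2e_2+a_{12}e_1e_2$ let $a^*=a_0+a_1e_1+a_2e_2-a_{12}e_1e_2$ (the reverse involution, $(ab)^*=b^*a^*$). $\mathcal A_2^{(0,1)}=\mathbb R+\mathbb Re_1+\mathbb Re_2$. $\exp x=\sum_{m\ge0}x^m/m!$, $\cosh x=\tfrac12(\exp x+\exp(-x^* ))$, $\sinh x=\tfrac12(\exp x-\exp(-x^* ))$. A Vahlen matrix is $\begin{pmatrix}a&b\\c&d\end{pmatrix}$ with $a,b,c,d\in\mathcal A_2$, $ad^*-bc^*=1$ and $ab^*,cd^*\in\mathcal A_2^{(0,1)}$; it acts on $\mathcal A_2^{(0,1)}\cup\{\infty\}$ by $x\mapsto(ax+b)(cx+d)^{-1}$, $\infty\mapsto ac^{-1}$. The Möbius transformations (conformal orientation-preserving automorphisms) of $\mathcal A_2^{(0,1)}\cup\{\infty\}$ are exactly these maps, each given by exactly two Vahlen matrices $\pm A$. *)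

theory Defs
  imports Complex_Main
begin

datatype a2 = A2 (c0: real) (c1: real) (c2: real) (c12: real)

lemma a2_eq_iff: "x = y \<longleftrightarrow> c0 x = c0 y \<and> c1 x = c1 y \<and> c2 x = c2 y \<and> c12 x = c12 y"
  by (cases x; cases y) auto

instantiation a2 :: ring_1
begin
definition "0 = A2 0 0 0 0"
definition "1 = A2 1 0 0 0"
definition "x + y = A2 (c0 x + c0 y) (c1 x + c1 y) (c2 x + c2 y) (c12 x + c12 y)"
definition "x - y = A2 (c0 x - c0 y) (c1 x - c1 y) (c2 x - c2 y) (c12 x - c12 y)"
definition "- x = A2 (- c0 x) (- c1 x) (- c2 x) (- c12 x)"
text \<open>Multiplication from e1^2 = e2^2 = -1, e1 e2 = - e2 e1 (so (e1e2)^2 = -1,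
  e1(e1e2) = -e2, (e1e2)e1 = e2, e2(e1e2) = e1, (e1e2)e2 = -e1).\<close>
definition "x * y = A2
   (c0 x * c0 y - c1 x * c1 y - c2 x * c2 y - c12 x * c12 y)
   (c0 x * c1 y + c1 x * c0 y + c2 x * c12 y - c12 x * c2 y)
   (c0 x * c2 y - c1 x * c12 y + c2 x * c0 y + c12 x * c1 y)
   (c0 x * c12 y + c1 x * c2 y - c2 x * c1 y + c12 x * c0 y)"
instance
  by standard (auto simp: a2_eq_iff zero_a2_def one_a2_def plus_a2_def minus_a2_def
      uminus_a2_def times_a2_def algebra_simps)
end

definition e1 :: a2 where "e1 = A2 0 1 0 0"
definition e2 :: a2 where "e2 = A2 0 0 1 0"

definition a2_rev :: "a2 \<Rightarrow> a2" ("_\<^sup>*" [1000] 999)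
  where "x\<^sup>* = A2 (c0 x) (c1 x) (c2 x) (- c12 x)"

definition paravec :: "a2 set" where "paravec = {x. c12 x = 0}"

text \<open>Multiplicative inverse (A_2 is a division algebra); inverse of 0 is set to 0
  and never used in the action below.\<close>
definition a2_inv :: "a2 \<Rightarrow> a2" where
  "a2_inv x = (let n = (c0 x)\<^sup>2 + (c1 x)\<^sup>2 + (c2 x)\<^sup>2 + (c12 x)\<^sup>2 in
      A2 (c0 x / n) (- c1 x / n) (- c2 x / n) (- c12 x / n))"

text \<open>exp x = sum_{m>=0} x^m / m!, the series taken in the 4-dimensional real vector
  space A_2, i.e. componentwise (it converges absolutely for every x).\<close>
definition a2_exp :: "a2 \<Rightarrow> a2" where
  "a2_exp x = A2 (\<Sum>m. c0 (x ^ m) / fact m) (\<Sum>m. c1 (x ^ m) / fact m)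
                 (\<Sum>m. c2 (x ^ m) / fact m) (\<Sum>m. c12 (x ^ m) / fact m)"

definition half :: "a2 \<Rightarrow> a2" where
  "half x = A2 (c0 x / 2) (c1 x / 2) (c2 x / 2) (c12 x / 2)"

definition a2_cosh :: "a2 \<Rightarrow> a2" where
  "a2_cosh x = half (a2_exp x + a2_exp (- (x\<^sup>*)))"
definition a2_sinh :: "a2 \<Rightarrow> a2" where
  "a2_sinh x = half (a2_exp x - a2_exp (- (x\<^sup>*)))"

text \<open>A 2x2 matrix (a b; c d) is represented as the tuple (a, b, c, d).\<close>
type_synonym mat2 = "a2 \<times> a2 \<times> a2 \<times> a2"

definition vahlen :: "mat2 \<Rightarrow> bool" where
  "vahlen A = (case A of (a, b, c, d) \<Rightarrow>
     a * d\<^sup>* - b * c\<^sup>* = 1 \<and> a * b\<^sup>* \<in> paravec \<and> c * d\<^sup>* \<in> paravec)"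

definition mat_neg :: "mat2 \<Rightarrow> mat2" where
  "mat_neg A = (case A of (a, b, c, d) \<Rightarrow> (- a, - b, - c, - d))"

text \<open>Points of A_2^(0,1) \<union> {\<infinity>}: None is \<infinity>, Some x a finite point.\<close>
definition mob_act :: "mat2 \<Rightarrow> a2 option \<Rightarrow> a2 option" where
  "mob_act A p = (case A of (a, b, c, d) \<Rightarrow>
     (case p of
        None \<Rightarrow> (if c = 0 then None else Some (a * a2_inv c))
      | Some x \<Rightarrow> (if c * x + d = 0 then None
                   else Some ((a * x + b) * a2_inv (c * x + d)))))"

definition cosh_sinh_mat :: "a2 \<Rightarrow> mat2" where
  "cosh_sinh_mat x = (a2_cosh x, a2_sinh x, a2_sinh x, a2_cosh x)"

end

theory Submission
  imports Defs
begin

text \<open>Evaluating the action at \<open>1\<close> and \<open>-1\<close> shows that a Vahlen matrix fixes both points iff it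
  has the shape \<open>(a, b; b, a)\<close>; for such a matrix the Vahlen conditions amount to
  \<open>(a + b) (a - b)\<^sup>* = 1\<close>. The exponential of \<open>\<A>\<^sub>2\<close> maps every complex slice \<open>\<real> + \<real>n\<close>
  (\<open>n\<^sup>2 = -1\<close>) onto itself like the complex exponential, so it is onto the nonzero elements:
  choosing \<open>x\<close> with \<open>exp x = a + b\<close> forces \<open>exp (-x\<^sup>*) = a - b\<close>, and then \<open>cosh x = a\<close>,
  \<open>sinh x = b\<close>.\<close>

lemma a2_components [simp]:
  "c0 (x + y) = c0 x + c0 y" "c1 (x + y) = c1 x + c1 y"
  "c2 (x + y) = c2 x + c2 y" "c12 (x + y) = c12 x + c12 y"
  "c0 (x - y) = c0 x - c0 y" "c1 (x - y) = c1 x - c1 y"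
  "c2 (x - y) = c2 x - c2 y" "c12 (x - y) = c12 x - c12 y"
  "c0 (- x) = - c0 x" "c1 (- x) = - c1 x" "c2 (- x) = - c2 x" "c12 (- x) = - c12 x"
  "c0 0 = 0" "c1 0 = 0" "c2 0 = 0" "c12 0 = 0"
  "c0 1 = 1" "c1 1 = 0" "c2 1 = 0" "c12 1 = 0"
  "c0 (a2_rev x) = c0 x" "c1 (a2_rev x) = c1 x" "c2 (a2_rev x) = c2 x" "c12 (a2_rev x) = - c12 x"
  "c0 (half x) = c0 x / 2" "c1 (half x) = c1 x / 2"
  "c2 (half x) = c2 x / 2" "c12 (half x) = c12 x / 2"
  "c0 (x * y) = c0 x * c0 y - c1 x * c1 y - c2 x * c2 y - c12 x * c12 y"
  "c1 (x * y) = c0 x * c1 y + c1 x * c0 y + c2 x * c12 y - c12 x * c2 y"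
  "c2 (x * y) = c0 x * c2 y - c1 x * c12 y + c2 x * c0 y + c12 x * c1 y"
  "c12 (x * y) = c0 x * c12 y + c1 x * c2 y - c2 x * c1 y + c12 x * c0 y"
  by (simp_all add: plus_a2_def minus_a2_def uminus_a2_def zero_a2_def one_a2_def
      a2_rev_def half_def times_a2_def)

lemma a2_rev_rev [simp]: "a2_rev (a2_rev x) = x"
  by (simp add: a2_eq_iff)

lemma a2_rev_mult: "a2_rev (x * y) = a2_rev y * a2_rev x"
  by (simp add: a2_eq_iff algebra_simps)

lemma a2_rev_paravec: "x \<in> paravec \<Longrightarrow> a2_rev x = x"
  by (simp add: paravec_def a2_eq_iff)

lemma a2_inv_mult:
  assumes "x \<noteq> 0"
  shows "a2_inv x * x = 1" and "x * a2_inv x = 1"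
proof -
  define n where "n = (c0 x)\<^sup>2 + (c1 x)\<^sup>2 + (c2 x)\<^sup>2 + (c12 x)\<^sup>2"
  have "n \<noteq> 0"
    using assms by (auto simp: n_def a2_eq_iff add_nonneg_eq_0_iff)
  moreover have inv: "a2_inv x = A2 (c0 x / n) (- c1 x / n) (- c2 x / n) (- c12 x / n)"
    by (simp add: a2_inv_def Let_def n_def)
  moreover have "c0 x * c0 x + c1 x * c1 x + c2 x * c2 x + c12 x * c12 x = n"
    by (simp add: n_def power2_eq_square)
  ultimately show "a2_inv x * x = 1" and "x * a2_inv x = 1"
    unfolding inv by (simp_all add: a2_eq_iff divide_simps)
qed

lemma a2_mult_inv_eq_iff:
  assumes "y \<noteq> 0"
  shows "x * a2_inv y = z \<longleftrightarrow> x = z * y"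
proof
  assume "x * a2_inv y = z"
  then show "x = z * y"
    using a2_inv_mult(1)[OF assms] by (metis mult.assoc mult.right_neutral)
next
  assume "x = z * y"
  then show "x * a2_inv y = z"
    using a2_inv_mult(2)[OF assms] by (simp add: mult.assoc)
qed

lemma a2_right_inverse_unique:
  fixes u p q :: a2
  assumes "u * p = 1" and "u * q = 1" and "u \<noteq> 0"
  shows "p = q"
  using assms a2_inv_mult(1)[OF assms(3)] by (metis mult.assoc mult.left_neutral)

definition unit_imaginary :: "a2 \<Rightarrow> bool" where
  "unit_imaginary n \<longleftrightarrow> c0 n = 0 \<and> (c1 n)\<^sup>2 + (c2 n)\<^sup>2 + (c12 n)\<^sup>2 = 1"

text \<open>For \<open>unit_imaginary n\<close> we have \<open>n\<^sup>2 = -1\<close>, so \<open>z \<mapsto> Re z + Im z n\<close> embeds \<open>\<complex>\<close> as a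
  subring of \<open>\<A>\<^sub>2\<close>.\<close>

definition a2_of_complex :: "a2 \<Rightarrow> complex \<Rightarrow> a2" where
  "a2_of_complex n z = A2 (Re z) (Im z * c1 n) (Im z * c2 n) (Im z * c12 n)"

lemma a2_of_complex_components [simp]:
  "c0 (a2_of_complex n z) = Re z" "c1 (a2_of_complex n z) = Im z * c1 n"
  "c2 (a2_of_complex n z) = Im z * c2 n" "c12 (a2_of_complex n z) = Im z * c12 n"
  by (simp_all add: a2_of_complex_def)

lemma a2_of_complex_one [simp]: "a2_of_complex n 1 = 1"
  by (simp add: a2_eq_iff)

lemma a2_of_complex_mult:
  assumes "unit_imaginary n"
  shows "a2_of_complex n (z * w) = a2_of_complex n z * a2_of_complex n w"
proof -
  have "Im z * Im w = Im z * Im w * ((c1 n)\<^sup>2 + (c2 n)\<^sup>2 + (c12 n)\<^sup>2)"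
    using assms by (simp add: unit_imaginary_def)
  then show ?thesis
    by (simp add: a2_eq_iff algebra_simps power2_eq_square)
qed

lemma a2_of_complex_power:
  "unit_imaginary n \<Longrightarrow> a2_of_complex n (z ^ m) = a2_of_complex n z ^ m"
  by (induction m) (simp_all add: a2_of_complex_mult)

lemma a2_rev_of_complex: "a2_rev (a2_of_complex n z) = a2_of_complex (a2_rev n) z"
  by (simp add: a2_eq_iff)

lemma unit_imaginary_rev: "unit_imaginary n \<Longrightarrow> unit_imaginary (a2_rev n)"
  by (simp add: unit_imaginary_def)

lemma a2_exp_of_complex:
  assumes "unit_imaginary n"
  shows "a2_exp (a2_of_complex n z) = a2_of_complex n (exp z)"
proof -
  have Re: "(\<lambda>m. Re (z ^ m) / fact m) sums Re (exp z)"
    using sums_Re[OF exp_converges[of z]] by (simp add: divide_inverse mult.commute)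
  have "(\<lambda>m. Im (z ^ m) / fact m) sums Im (exp z)"
    using sums_Im[OF exp_converges[of z]] by (simp add: divide_inverse mult.commute)
  then have Im: "(\<lambda>m. Im (z ^ m) * c / fact m) sums (Im (exp z) * c)" for c
    using sums_mult2 by (fastforce simp: field_simps)
  show ?thesis
    unfolding a2_exp_def a2_of_complex_power[OF assms, symmetric]
    using sums_unique[OF Re] sums_unique[OF Im] by (simp add: a2_eq_iff)
qed

lemma a2_exp_mult_rev_exp_neg_rev:
  assumes "unit_imaginary n" and "x = a2_of_complex n z"
  shows "a2_exp x * a2_rev (a2_exp (- a2_rev x)) = 1"
proof -
  have "- a2_rev x = a2_of_complex (a2_rev n) (- z)"
    using assms(2) by (simp add: a2_eq_iff)
  then have "a2_rev (a2_exp (- a2_rev x)) = a2_of_complex n (exp (- z))"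
    using assms(1) by (simp add: a2_exp_of_complex unit_imaginary_rev a2_rev_of_complex)
  then show ?thesis
    using assms
    by (simp add: a2_exp_of_complex a2_of_complex_mult[symmetric] exp_minus_inverse)
qed

lemma a2_in_complex_slice: "\<exists>n w. unit_imaginary n \<and> u = a2_of_complex n w"
proof -
  define r where "r = sqrt ((c1 u)\<^sup>2 + (c2 u)\<^sup>2 + (c12 u)\<^sup>2)"
  have r2: "r\<^sup>2 = (c1 u)\<^sup>2 + (c2 u)\<^sup>2 + (c12 u)\<^sup>2"
    by (simp add: r_def)
  show ?thesis
  proof (cases "r = 0")
    case True
    then have "u = a2_of_complex e1 (of_real (c0 u))"
      using r2 by (simp add: a2_eq_iff add_nonneg_eq_0_iff)
    moreover have "unit_imaginary e1"
      by (simp add: unit_imaginary_def e1_def)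
    ultimately show ?thesis by blast
  next
    case False
    define n where "n = A2 0 (c1 u / r) (c2 u / r) (c12 u / r)"
    have "u = a2_of_complex n (Complex (c0 u) r)"
      using False by (simp add: a2_eq_iff n_def)
    moreover have "unit_imaginary n"
      using False by (simp add: unit_imaginary_def n_def power_divide
          flip: r2 add_divide_distrib)
    ultimately show ?thesis by blast
  qed
qed

lemma exp_ln_cmod_Arg: "w \<noteq> 0 \<Longrightarrow> exp (Complex (ln (cmod w)) (Arg w)) = w"
  by (simp add: exp_eq_polar rcis_cmod_Arg flip: rcis_def)

lemma a2_exp_surj:
  assumes "u \<noteq> 0"
  obtains x where "a2_exp x = u" and "u * a2_rev (a2_exp (- a2_rev x)) = 1"
proof -
  obtain n w where n: "unit_imaginary n" and u: "u = a2_of_complex n w"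
    using a2_in_complex_slice by blast
  with assms have "w \<noteq> 0"
    by (auto simp: a2_eq_iff)
  define x where "x = a2_of_complex n (Complex (ln (cmod w)) (Arg w))"
  have "a2_exp x = u"
    using n u \<open>w \<noteq> 0\<close> by (simp add: x_def a2_exp_of_complex exp_ln_cmod_Arg)
  moreover have "a2_exp x * a2_rev (a2_exp (- a2_rev x)) = 1"
    using a2_exp_mult_rev_exp_neg_rev[OF n x_def] .
  ultimately show ?thesis
    using that by simp
qed

lemma mob_act_fixes_one_iff:
  "mob_act (a, b, c, d) (Some 1) = Some 1 \<longleftrightarrow> c + d \<noteq> 0 \<and> a + b = c + d"
  by (auto simp: mob_act_def a2_mult_inv_eq_iff)

lemma mob_act_fixes_neg_one_iff:
  "mob_act (a, b, c, d) (Some (- 1)) = Some (- 1) \<longleftrightarrow> d - c \<noteq> 0 \<and> a - b = d - c"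
proof -
  have "(b - a) * a2_inv (d - c) = - 1 \<longleftrightarrow> b - a = - 1 * (d - c)" if "d - c \<noteq> 0"
    using a2_mult_inv_eq_iff[OF that] .
  also have "\<dots> \<longleftrightarrow> a - b = d - c"
    by (auto simp: a2_eq_iff)
  finally show ?thesis
    by (auto simp: mob_act_def)
qed

lemma mob_act_fixes_one_neg_one_iff:
  "mob_act (a, b, c, d) (Some (- 1)) = Some (- 1) \<and> mob_act (a, b, c, d) (Some 1) = Some 1
   \<longleftrightarrow> c = b \<and> d = a \<and> a + b \<noteq> 0 \<and> a - b \<noteq> 0"
  unfolding mob_act_fixes_one_iff mob_act_fixes_neg_one_iff
  by (auto simp: a2_eq_iff)

lemma vahlen_symmetric_mult_rev:
  assumes "vahlen (a, b, b, a)"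
  shows "(a + b) * a2_rev (a - b) = 1"
proof -
  have det: "a * a2_rev a - b * a2_rev b = 1" and "a * a2_rev b \<in> paravec"
    using assms by (auto simp: vahlen_def)
  then have "b * a2_rev a = a * a2_rev b"
    using a2_rev_paravec by (metis a2_rev_mult a2_rev_rev)
  moreover have "(a + b) * a2_rev (a - b) = a * a2_rev a - b * a2_rev b + (b * a2_rev a - a * a2_rev b)"
    by (simp add: a2_eq_iff algebra_simps)
  ultimately show ?thesis
    using det by simp
qed

lemma symmetric_eq_cosh_sinh_mat:
  assumes "(a + b) * a2_rev (a - b) = 1"
  obtains x where "(a, b, b, a) = cosh_sinh_mat x"
proof -
  have "a + b \<noteq> 0"
    using assms by auto
  then obtain x where exp: "a2_exp x = a + b" and "(a + b) * a2_rev (a2_exp (- a2_rev x)) = 1"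
    using a2_exp_surj by blast
  then have "a2_exp (- a2_rev x) = a - b"
    using a2_right_inverse_unique[OF _ assms \<open>a + b \<noteq> 0\<close>] by (metis a2_rev_rev)
  then have "(a, b, b, a) = cosh_sinh_mat x"
    by (simp add: cosh_sinh_mat_def a2_cosh_def a2_sinh_def exp a2_eq_iff)
  then show ?thesis ..
qed

theorem proposition3p3:
  assumes "vahlen A"
  shows "(mob_act A (Some (- 1)) = Some (- 1) \<and> mob_act A (Some 1) = Some 1) \<longleftrightarrow>
         (\<exists>x. A = cosh_sinh_mat x \<or> mat_neg A = cosh_sinh_mat x)"
proof
  assume "mob_act A (Some (- 1)) = Some (- 1) \<and> mob_act A (Some 1) = Some 1"
  then obtain a b where A: "A = (a, b, b, a)"
    by (cases A) (auto simp: mob_act_fixes_one_neg_one_iff)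
  then obtain x where "A = cosh_sinh_mat x"
    using assms symmetric_eq_cosh_sinh_mat vahlen_symmetric_mult_rev by metis
  then show "\<exists>x. A = cosh_sinh_mat x \<or> mat_neg A = cosh_sinh_mat x" by blast
next
  assume "\<exists>x. A = cosh_sinh_mat x \<or> mat_neg A = cosh_sinh_mat x"
  then obtain a b where A: "A = (a, b, b, a)"
    by (cases A) (auto simp: cosh_sinh_mat_def mat_neg_def, metis neg_equal_iff_equal)
  have "(a + b) * a2_rev (a - b) = 1"
    using assms A vahlen_symmetric_mult_rev by simp
  then have "a + b \<noteq> 0" and "a - b \<noteq> 0"
    by (auto simp: a2_eq_iff)
  then show "mob_act A (Some (- 1)) = Some (- 1) \<and> mob_act A (Some 1) = Some 1"
    by (simp add: A mob_act_fixes_one_neg_one_iff)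
qed

end
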